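(* Let $N=(V,E,c)$ be a network with $c_{\min}=\inf_{x\in V}c(x)>0$, fix $o\in V$ and $\gamma\in\mathbb{R}$, and let $K:V\to[0,\infty)$ be defined by $K(x)=c(x)\min\{1,\langle x\rangle^{-2}(\log\langle x\rangle)^\gamma\}$. Let $p_n$ denote the $n$-step transition probabilities of the random walk on the network with killing $(V,E,c,K)$. Then there exists a constant $\kappa=\kappa(\gamma)>0$ such that \[ p_n(x,o)\leq\sqrt{\frac{8c(o)}{c_{\min}}}\exp\big[-\kappa(\log n)^{\gamma/2}\big] \] for every $x\in V$ and $n\geq2$. In particular, if $\gamma>2$ then $\lim_{n\to\infty}\frac{\log\sup_{u\in V}p_n(u,o)}{\log n}=-\infty$.
   Context: A network $(V,E,c)$ has conductances $c:E\to(0,\infty)$; $c(u)$ is the total conductance of oriented edges emanating from $u$ and $c(u,v)$ that of oriented edges from $u$ to $v$. $d$ is the graph distance in $(V,E)$ and $\langle x\rangle=2\vee d(o,x)$. For a killing function $K:V\to[0,\infty)$, the random walk on $(V,E,c,K)$ is the Markov chain on $V\cup\{\dagger\}$ with $P(u,v)=c(u,v)/(c(u)+K(u))$, $P(u,\dagger)=K(u)/(c(u)+K(u))$ for $u,v\in V$, and $P(\dagger,\dagger)=1$; $p_n=P^n$. *)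

theory Defs
  imports "HOL-Analysis.Analysis"
begin

text \<open>A network is given by its (oriented-edge) conductance function:
  cond u v = total conductance of oriented edges from u to v (0 if none).\<close>

definition adj :: "('v \<Rightarrow> 'v \<Rightarrow> real) \<Rightarrow> 'v \<Rightarrow> 'v \<Rightarrow> bool" where
  "adj cond u v \<longleftrightarrow> cond u v > 0"

definition network :: "('v \<Rightarrow> 'v \<Rightarrow> real) \<Rightarrow> bool" where
  "network cond \<longleftrightarrow>
     (\<forall>u v. cond u v \<ge> 0) \<and> (\<forall>u v. cond u v = cond v u) \<and>
     (\<forall>u. cond u summable_on UNIV) \<and> (\<forall>x y. (adj cond)\<^sup>*\<^sup>* x y)"

definition cv :: "('v \<Rightarrow> 'v \<Rightarrow> real) \<Rightarrow> 'v \<Rightarrow> real" where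
  "cv cond u = (\<Sum>\<^sub>\<infinity>v. cond u v)"

definition cmin :: "('v \<Rightarrow> 'v \<Rightarrow> real) \<Rightarrow> real" where
  "cmin cond = (INF x. cv cond x)"

definition gdist :: "('v \<Rightarrow> 'v \<Rightarrow> real) \<Rightarrow> 'v \<Rightarrow> 'v \<Rightarrow> nat" where
  "gdist cond x y = (LEAST n. (adj cond ^^ n) x y)"

definition bracket :: "('v \<Rightarrow> 'v \<Rightarrow> real) \<Rightarrow> 'v \<Rightarrow> 'v \<Rightarrow> real" where
  "bracket cond r x = real (max 2 (gdist cond r x))"

definition killing :: "real \<Rightarrow> ('v \<Rightarrow> 'v \<Rightarrow> real) \<Rightarrow> 'v \<Rightarrow> 'v \<Rightarrow> real" where
  "killing \<gamma> cond r x = cv cond x *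
     min 1 ((bracket cond r x) powr (-2) * (ln (bracket cond r x)) powr \<gamma>)"

definition trans :: "('v \<Rightarrow> 'v \<Rightarrow> real) \<Rightarrow> ('v \<Rightarrow> real) \<Rightarrow> 'v \<Rightarrow> 'v \<Rightarrow> real" where
  "trans cond K u v = cond u v / (cv cond u + K u)"

text \<open>n-step transition probabilities p_n(x,y) for x,y in V (the cemetery is absorbing,
  so only paths inside V contribute)\<close>
fun pn :: "('v \<Rightarrow> 'v \<Rightarrow> real) \<Rightarrow> ('v \<Rightarrow> real) \<Rightarrow> nat \<Rightarrow> 'v \<Rightarrow> 'v \<Rightarrow> real" where
  "pn cond K 0 x y = (if x = y then 1 else 0)"
| "pn cond K (Suc n) x y = (\<Sum>\<^sub>\<infinity>z. trans cond K x z * pn cond K n z y)"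

end

theory Submission
  imports Defs "HOL-Probability.Hoeffding" "HOL-Real_Asymp.Real_Asymp"
begin

(* The walk with killing is reversible with respect to \<pi> = c + K, so on every finite
   window F its restricted operator P_F is a self-adjoint contraction of l2(\<pi>). Writing
   x^m = E T_|S_m|(x) for a simple random walk S_m and the Chebyshev polynomials T_k, and
   using that T_k(P_F) is again a contraction (Pell's identity) and that T_k(P_F) applied to
   the indicator of o vanishes beyond distance k, a Chernoff bound for S_m gives the
   Carne-Varopoulos estimate p_m(z,o) <= 2 sqrt(\<pi>(o)/\<pi>(z)) exp(-d(o,z)^2/(2m)).

   Put L = (log n)^(\<gamma>/2) and R = sqrt(n L). Inside the ball of radius R around o the
   walk is killed at each step with probability at least of order L/n, so it survives n
   steps there with probability exp(-c L); started outside the ball, Carne-Varopoulos bounds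
   its chance to reach o within n steps by C exp(-L/2), where C = sqrt(8 c(o) / c_min)
   bounds 2 sqrt(\<pi>(o)/\<pi>(z)). For small n the trivial bound
   p_n <= 1 <= C/2 suffices. When \<gamma> > 2, (log n)^(\<gamma>/2) / log n tends to infinity. *)

definition step_sum :: "bool list \<Rightarrow> int" where
  "step_sum xs = sum_list (map (\<lambda>b. if b then 1 else -1) xs)"

lemma step_sum_Cons:
  "step_sum (True # xs) = step_sum xs + 1" "step_sum (False # xs) = step_sum xs - 1"
  by (simp_all add: step_sum_def)

lemma finite_bool_lists_length: "finite {xs :: bool list. length xs = m}"
  using finite_lists_length_eq[of "UNIV :: bool set" m] by simp

lemma sum_bool_lists_Suc:
  "(\<Sum>xs | length xs = Suc m. f xs) = (\<Sum>xs | length xs = m. f (True # xs) + f (False # xs))"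
proof -
  have split: "{xs. length xs = Suc m}
      = Cons True ` {xs. length xs = m} \<union> Cons False ` {xs. length xs = m}"
    by (auto simp: length_Suc_conv)
  have "(\<Sum>xs | length xs = Suc m. f xs)
      = (\<Sum>xs\<in>Cons True ` {xs. length xs = m}. f xs) + (\<Sum>xs\<in>Cons False ` {xs. length xs = m}. f xs)"
    unfolding split by (rule sum.union_disjoint) (auto simp: finite_bool_lists_length)
  also have "\<dots> = (\<Sum>xs | length xs = m. f (True # xs)) + (\<Sum>xs | length xs = m. f (False # xs))"
    by (simp add: sum.reindex)
  finally show ?thesis by (simp add: sum.distrib)
qed

lemma sum_exp_step_sum:
  fixes l :: real
  shows "(\<Sum>xs | length xs = m. exp (l * step_sum xs)) = (exp l + exp (-l)) ^ m"
proof (induction m)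
  case 0 thus ?case by (simp add: step_sum_def)
next
  case (Suc m)
  have "exp (l * (step_sum xs + 1)) + exp (l * (step_sum xs - 1))
      = (exp l + exp (-l)) * exp (l * step_sum xs)" for xs
    by (simp add: algebra_simps flip: exp_add)
  then show ?case
    by (simp add: sum_bool_lists_Suc step_sum_Cons Suc flip: sum_distrib_left)
qed

text \<open>Hoeffding's lemma with \<open>h = 2 l\<close> and \<open>p = 1/2\<close> reads \<open>ln (cosh l) \<le> l\<^sup>2 / 2\<close>.\<close>
lemma exp_plus_exp_minus_le:
  fixes l :: real
  assumes "0 \<le> l"
  shows "exp l + exp (-l) \<le> 2 * exp (l\<^sup>2 / 2)"
proof -
  define c where "c = (exp l + exp (-l)) / 2"
  have c: "0 < c" by (simp add: c_def add_pos_pos)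
  have "- (2 * l) * (1/2) + ln (1 + 1/2 * (exp (2 * l) - 1)) \<le> (2 * l)\<^sup>2 / 8"
    by (rule Hoeffdings_lemma_aux) (use assms in auto)
  moreover have "1 + 1/2 * (exp (2 * l) - 1) = exp l * c"
    by (simp add: c_def field_simps flip: exp_add)
  ultimately have "ln c \<le> l\<^sup>2 / 2"
    using c by (simp add: ln_mult_pos power2_eq_square)
  then have "c \<le> exp (l\<^sup>2 / 2)"
    using c by (metis exp_le_cancel_iff exp_ln)
  then show ?thesis by (simp add: c_def)
qed

text \<open>Chernoff's method with the exponent \<open>l = d / m\<close>.\<close>
lemma card_step_sum_tail:
  fixes d :: real
  assumes "1 \<le> m" "0 \<le> d"
  shows "(\<Sum>xs | length xs = m. if d \<le> \<bar>real_of_int (step_sum xs)\<bar> then 1 else 0)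
    \<le> 2 * 2 ^ m * exp (- d\<^sup>2 / (2 * m))"
proof -
  define l where "l = d / m"
  have l: "0 \<le> l" using assms by (simp add: l_def)
  have indicator_le: "(if d \<le> \<bar>S\<bar> then 1 else 0) \<le> exp (- l * d) * (exp (l * S) + exp (- l * S))"
    for S :: real
  proof -
    have "exp (l * \<bar>S\<bar>) \<le> exp (l * S) + exp (- l * S)"
      by (cases "0 \<le> S") (auto simp: add_increasing add_increasing2)
    moreover have "d \<le> \<bar>S\<bar> \<Longrightarrow> 1 \<le> exp (- l * d) * exp (l * \<bar>S\<bar>)"
      using l mult_left_mono[of d "\<bar>S\<bar>" l] by (simp add: algebra_simps flip: exp_add)
    ultimately show ?thesis
      by (auto intro: order_trans mult_left_mono)
  qed
  have "(\<Sum>xs | length xs = m. if d \<le> \<bar>real_of_int (step_sum xs)\<bar> then 1 else 0)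
      \<le> (\<Sum>xs | length xs = m. exp (- l * d) * (exp (l * step_sum xs) + exp (- l * step_sum xs)))"
    by (intro sum_mono) (use indicator_le in simp)
  also have "\<dots> = exp (- l * d) * (2 * (exp l + exp (-l)) ^ m)"
    using sum_exp_step_sum[of l m] sum_exp_step_sum[of "-l" m]
    by (simp add: sum.distrib add.commute flip: sum_distrib_left)
  also have "\<dots> \<le> exp (- l * d) * (2 * (2 * exp (l\<^sup>2 / 2)) ^ m)"
    by (intro mult_left_mono power_mono exp_plus_exp_minus_le l) (auto intro: add_nonneg_nonneg)
  also have "\<dots> = 2 * 2 ^ m * exp (- l * d + m * (l\<^sup>2 / 2))"
    by (simp add: power_mult_distrib mult_exp_exp flip: exp_of_nat_mult)
  also have "- l * d + m * (l\<^sup>2 / 2) = - d\<^sup>2 / (2 * m)"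
    using assms by (simp add: l_def field_simps power2_eq_square)
  finally show ?thesis .
qed

locale network_with_killing =
  fixes cond :: "'v \<Rightarrow> 'v \<Rightarrow> real" and K :: "'v \<Rightarrow> real"
  assumes network: "network cond"
    and killing_nonneg: "0 \<le> K u"
    and cv_pos: "0 < cv cond u"
begin

lemma cond_nonneg: "0 \<le> cond u v"
  and cond_sym: "cond u v = cond v u"
  and cond_summable: "cond u summable_on UNIV"
  and connected: "(adj cond)\<^sup>*\<^sup>* x y"
  using network by (auto simp: network_def)

definition \<pi> :: "'v \<Rightarrow> real" where
  "\<pi> u = cv cond u + K u"

abbreviation P :: "'v \<Rightarrow> 'v \<Rightarrow> real" where
  "P \<equiv> trans cond K"

abbreviation p :: "nat \<Rightarrow> 'v \<Rightarrow> 'v \<Rightarrow> real" where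
  "p \<equiv> pn cond K"

lemma cv_le_\<pi>: "cv cond u \<le> \<pi> u"
  using killing_nonneg[of u] by (simp add: \<pi>_def)

lemma \<pi>_pos: "0 < \<pi> u"
  using cv_pos[of u] cv_le_\<pi>[of u] by linarith

lemma \<pi>_neq_0: "\<pi> u \<noteq> 0"
  using \<pi>_pos[of u] by simp

lemma P_eq: "P u v = cond u v / \<pi> u"
  by (simp add: trans_def \<pi>_def)

lemma P_nonneg: "0 \<le> P u v"
  using cond_nonneg[of u v] \<pi>_pos[of u] by (simp add: P_eq)

lemma P_summable: "P u summable_on UNIV"
  using summable_on_cmult_left[OF cond_summable[of u], where c = "1 / \<pi> u"]
  by (simp add: P_eq[abs_def])

lemma infsum_P: "(\<Sum>\<^sub>\<infinity>v. P u v) = cv cond u / \<pi> u"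
  using infsum_cmult_left[where c = "1 / \<pi> u" and f = "cond u" and A = UNIV] cond_summable
  by (simp add: P_eq cv_def)

lemma sum_cond_le_cv: "finite F \<Longrightarrow> sum (cond u) F \<le> cv cond u"
  unfolding cv_def by (rule finite_sum_le_infsum[OF cond_summable]) (auto simp: cond_nonneg)

lemma sum_P_le_1: "finite F \<Longrightarrow> sum (P u) F \<le> 1"
proof -
  assume "finite F"
  then have "sum (P u) F \<le> (\<Sum>\<^sub>\<infinity>v. P u v)"
    by (intro finite_sum_le_infsum P_summable) (auto simp: P_nonneg)
  also have "\<dots> \<le> 1"
    using cv_le_\<pi>[of u] \<pi>_pos[of u] by (simp add: infsum_P)
  finally show ?thesis .
qed

lemma
  assumes "\<And>z. 0 \<le> f z" "\<And>z. f z \<le> B"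
  shows summable_P_mult: "(\<lambda>z. P u z * f z) summable_on UNIV"
    and infsum_P_mult_le: "(\<Sum>\<^sub>\<infinity>z. P u z * f z) \<le> cv cond u / \<pi> u * B"
proof -
  have le: "P u z * f z \<le> P u z * B" for z
    using assms P_nonneg by (simp add: mult_left_mono)
  have PB: "(\<lambda>z. P u z * B) summable_on UNIV"
    by (rule summable_on_cmult_left[OF P_summable])
  show summable: "(\<lambda>z. P u z * f z) summable_on UNIV"
    by (rule summable_on_comparison_test[OF PB]) (use assms P_nonneg le in auto)
  have "(\<Sum>\<^sub>\<infinity>z. P u z * f z) \<le> (\<Sum>\<^sub>\<infinity>z. P u z * B)"
    by (rule infsum_mono[OF summable PB le])
  also have "\<dots> = cv cond u / \<pi> u * B"
    by (simp add: infsum_cmult_left P_summable infsum_P)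
  finally show "(\<Sum>\<^sub>\<infinity>z. P u z * f z) \<le> cv cond u / \<pi> u * B" .
qed

lemma pn_nonneg_le_1: "0 \<le> p n x y \<and> p n x y \<le> 1"
proof (induction n arbitrary: x)
  case 0 then show ?case by simp
next
  case (Suc n)
  have "p (Suc n) x y \<le> cv cond x / \<pi> x * 1"
    using infsum_P_mult_le[of "\<lambda>z. p n z y" 1 x] Suc by simp
  also have "\<dots> \<le> 1"
    using cv_le_\<pi>[of x] \<pi>_pos[of x] by simp
  finally show ?case
    using Suc P_nonneg by (auto intro: infsum_nonneg)
qed

lemma pn_nonneg: "0 \<le> p n x y" and pn_le_1: "p n x y \<le> 1"
  using pn_nonneg_le_1 by auto

lemma summable_P_pn: "(\<lambda>z. P x z * p n z y) summable_on UNIV"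
  by (rule summable_P_mult[of _ 1]) (auto simp: pn_nonneg pn_le_1)

lemma P_mult_pn_le_pn_Suc: "P x z * p n z y \<le> p (Suc n) x y"
  using finite_sum_le_infsum[OF summable_P_pn, of "{z}"] by (simp add: P_nonneg pn_nonneg)

fun pn_within :: "'v set \<Rightarrow> nat \<Rightarrow> 'v \<Rightarrow> 'v \<Rightarrow> real" where
  "pn_within F 0 x y = (if x = y then 1 else 0)"
| "pn_within F (Suc n) x y = (\<Sum>z\<in>F. P x z * pn_within F n z y)"

lemma pn_within_nonneg: "0 \<le> pn_within F n x y"
  by (induction n arbitrary: x) (auto intro!: sum_nonneg mult_nonneg_nonneg P_nonneg)

lemma pn_within_mono:
  assumes "F \<subseteq> G" "finite G"
  shows "pn_within F n x y \<le> pn_within G n x y"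
proof (induction n arbitrary: x)
  case 0 then show ?case by simp
next
  case (Suc n)
  have "(\<Sum>z\<in>F. P x z * pn_within F n z y) \<le> (\<Sum>z\<in>F. P x z * pn_within G n z y)"
    by (intro sum_mono mult_left_mono Suc P_nonneg)
  also have "\<dots> \<le> (\<Sum>z\<in>G. P x z * pn_within G n z y)"
    by (rule sum_mono2) (use assms P_nonneg pn_within_nonneg in auto)
  finally show ?case by simp
qed

lemma pn_approx_within:
  assumes "0 < \<epsilon>"
  shows "\<exists>F. finite F \<and> p n x y \<le> pn_within F n x y + \<epsilon>"
  using assms
proof (induction n arbitrary: x \<epsilon>)
  case 0
  then show ?case by (intro exI[of _ "{}"]) simp
next
  case (Suc n)
  define f where "f = (\<lambda>z. P x z * p n z y)"
  have "f summable_on UNIV"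
    unfolding f_def by (rule summable_P_pn)
  then obtain Z where Z: "finite Z" "dist (sum f Z) (\<Sum>\<^sub>\<infinity>z. f z) \<le> \<epsilon> / 2"
    using infsum_finite_approximation[of f UNIV "\<epsilon> / 2"] Suc.prems by auto
  obtain Fz where Fz: "\<And>z. finite (Fz z)" "\<And>z. p n z y \<le> pn_within (Fz z) n z y + \<epsilon> / 2"
    using Suc.IH[of "\<epsilon> / 2"] Suc.prems by (metis half_gt_zero)
  define G where "G = Z \<union> (\<Union>z\<in>Z. Fz z)"
  have G: "finite G" "Z \<subseteq> G" "\<And>z. z \<in> Z \<Longrightarrow> Fz z \<subseteq> G"
    using Z(1) Fz(1) by (auto simp: G_def)
  have "p (Suc n) x y = (\<Sum>\<^sub>\<infinity>z. f z)"
    by (simp add: f_def)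
  also have "\<dots> \<le> sum f Z + \<epsilon> / 2"
    using Z(2) unfolding dist_real_def by arith
  also have "sum f Z \<le> (\<Sum>z\<in>Z. P x z * (pn_within G n z y + \<epsilon> / 2))"
    unfolding f_def
  proof (intro sum_mono mult_left_mono P_nonneg)
    fix z assume "z \<in> Z"
    then show "p n z y \<le> pn_within G n z y + \<epsilon> / 2"
      using Fz(2)[of z] pn_within_mono[OF G(3) G(1), of z n z y] by linarith
  qed
  also have "\<dots> = (\<Sum>z\<in>Z. P x z * pn_within G n z y) + \<epsilon> / 2 * sum (P x) Z"
    by (simp add: distrib_left sum.distrib sum_distrib_left mult.commute)
  also have "(\<Sum>z\<in>Z. P x z * pn_within G n z y) \<le> pn_within G (Suc n) x y"
    by (simp, rule sum_mono2) (use G P_nonneg pn_within_nonneg in auto)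
  also have "\<epsilon> / 2 * sum (P x) Z \<le> \<epsilon> / 2"
    using sum_P_le_1[OF Z(1), of x] Suc.prems by (simp add: mult_left_le)
  finally show ?case
    using G(1) by (intro exI[of _ G]) simp
qed

lemma gdist_relpowp: "(adj cond ^^ gdist cond x y) x y"
  unfolding gdist_def by (rule LeastI_ex) (rule rtranclp_imp_relpowp[OF connected])

lemma gdist_le: "(adj cond ^^ n) x y \<Longrightarrow> gdist cond x y \<le> n"
  unfolding gdist_def by (rule Least_le)

lemma gdist_self: "gdist cond x x = 0"
  using gdist_le[of 0 x x] by simp

lemma gdist_le_Suc_gdist:
  assumes "cond z v \<noteq> 0"
  shows "gdist cond r z \<le> Suc (gdist cond r v)"
proof -
  have "adj cond v z"
    using assms cond_nonneg[of z v] cond_sym[of z v] by (simp add: adj_def)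
  then show ?thesis
    by (intro gdist_le relpowp_Suc_I[OF gdist_relpowp])
qed

end

locale restricted_network = network_with_killing cond K
  for cond :: "'v \<Rightarrow> 'v \<Rightarrow> real" and K +
  fixes F :: "'v set"
  assumes finite_F: "finite F"
begin

definition PF :: "('v \<Rightarrow> real) \<Rightarrow> 'v \<Rightarrow> real" where
  "PF f u = (\<Sum>v\<in>F. P u v * f v)"

definition inner_\<pi> :: "('v \<Rightarrow> real) \<Rightarrow> ('v \<Rightarrow> real) \<Rightarrow> real" where
  "inner_\<pi> f g = (\<Sum>u\<in>F. \<pi> u * f u * g u)"

lemma PF_add: "PF (\<lambda>u. f u + g u) = (\<lambda>u. PF f u + PF g u)"
  and PF_diff: "PF (\<lambda>u. f u - g u) = (\<lambda>u. PF f u - PF g u)"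
  and PF_divide: "PF (\<lambda>u. f u / c) = (\<lambda>u. PF f u / c)"
  and PF_sum: "PF (\<lambda>u. \<Sum>i\<in>I. h i u) = (\<lambda>u. \<Sum>i\<in>I. PF (h i) u)"
  and PF_zero: "PF (\<lambda>u. 0) = (\<lambda>u. 0)"
  by (auto simp: PF_def algebra_simps sum.distrib sum_subtractf sum_divide_distrib
      sum_distrib_left sum.swap[of _ F I])

lemma inner_\<pi>_add_left: "inner_\<pi> (\<lambda>u. f u + g u) h = inner_\<pi> f h + inner_\<pi> g h"
  and inner_\<pi>_add_right: "inner_\<pi> h (\<lambda>u. f u + g u) = inner_\<pi> h f + inner_\<pi> h g"
  and inner_\<pi>_diff_left: "inner_\<pi> (\<lambda>u. f u - g u) h = inner_\<pi> f h - inner_\<pi> g h"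
  and inner_\<pi>_diff_right: "inner_\<pi> h (\<lambda>u. f u - g u) = inner_\<pi> h f - inner_\<pi> h g"
  and inner_\<pi>_commute: "inner_\<pi> f g = inner_\<pi> g f"
  by (simp_all add: inner_\<pi>_def algebra_simps sum.distrib sum_subtractf)

lemma \<pi>_mult_PF: "\<pi> u * PF f u = (\<Sum>v\<in>F. cond u v * f v)"
  using \<pi>_pos[of u] by (simp add: PF_def P_eq sum_distrib_left)

text \<open>Reversibility \<open>\<pi> u P u v = cond u v = \<pi> v P v u\<close> makes \<open>PF\<close> self-adjoint.\<close>
lemma inner_\<pi>_PF: "inner_\<pi> (PF f) g = inner_\<pi> f (PF g)"
proof -
  have "inner_\<pi> (PF f) g = (\<Sum>u\<in>F. \<Sum>v\<in>F. cond u v * f v * g u)"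
    by (simp add: inner_\<pi>_def \<pi>_mult_PF sum_distrib_right)
  also have "\<dots> = (\<Sum>v\<in>F. \<Sum>u\<in>F. cond v u * g u * f v)"
    by (subst sum.swap) (simp add: cond_sym mult_ac)
  also have "\<dots> = (\<Sum>v\<in>F. f v * (\<pi> v * PF g v))"
    by (simp add: \<pi>_mult_PF sum_distrib_left mult_ac)
  also have "\<dots> = inner_\<pi> f (PF g)"
    by (simp add: inner_\<pi>_def mult_ac)
  finally show ?thesis .
qed

lemma PF_square_le: "(PF f u)\<^sup>2 \<le> (\<Sum>v\<in>F. P u v * (f v)\<^sup>2)"
proof -
  define a where "a = PF f u"
  have "0 \<le> (\<Sum>v\<in>F. P u v * (f v - a)\<^sup>2)"
    by (intro sum_nonneg mult_nonneg_nonneg P_nonneg) simp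
  also have "\<dots> = (\<Sum>v\<in>F. P u v * (f v)\<^sup>2) - 2 * a * PF f u + a\<^sup>2 * sum (P u) F"
    by (simp add: PF_def power2_eq_square algebra_simps sum.distrib sum_subtractf sum_distrib_left)
  also have "a\<^sup>2 * sum (P u) F \<le> a\<^sup>2"
    using sum_P_le_1[OF finite_F, of u] by (simp add: mult_left_le)
  finally show ?thesis
    by (simp add: a_def power2_eq_square)
qed

lemma inner_\<pi>_PF_le: "inner_\<pi> (PF f) (PF f) \<le> inner_\<pi> f f"
proof -
  have "inner_\<pi> (PF f) (PF f) = (\<Sum>u\<in>F. \<pi> u * (PF f u)\<^sup>2)"
    by (simp add: inner_\<pi>_def power2_eq_square mult.assoc)
  also have "\<dots> \<le> (\<Sum>u\<in>F. \<pi> u * (\<Sum>v\<in>F. P u v * (f v)\<^sup>2))"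
    by (intro sum_mono mult_left_mono PF_square_le less_imp_le \<pi>_pos)
  also have "\<dots> = (\<Sum>u\<in>F. \<Sum>v\<in>F. cond u v * (f v)\<^sup>2)"
    by (simp add: P_eq sum_distrib_left \<pi>_neq_0)
  also have "\<dots> = (\<Sum>v\<in>F. (\<Sum>u\<in>F. cond v u) * (f v)\<^sup>2)"
    by (subst sum.swap) (simp add: sum_distrib_right cond_sym)
  also have "\<dots> \<le> (\<Sum>v\<in>F. \<pi> v * (f v)\<^sup>2)"
    using sum_cond_le_cv[OF finite_F] cv_le_\<pi>
    by (intro sum_mono mult_right_mono) (auto intro: order_trans)
  also have "\<dots> = inner_\<pi> f f"
    by (simp add: inner_\<pi>_def power2_eq_square mult.assoc)
  finally show ?thesis .
qed

text \<open>\<open>chebT g k = T\<^sub>k(PF) g\<close> and \<open>chebU g k = U\<^sub>k\<^sub>-\<^sub>1(PF) g\<close> for the Chebyshev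
  polynomials \<open>T\<^sub>k\<close>, \<open>U\<^sub>k\<close>, via \<open>T\<^sub>k\<^sub>+\<^sub>1 = x T\<^sub>k - (1 - x\<^sup>2) U\<^sub>k\<^sub>-\<^sub>1\<close> and
  \<open>U\<^sub>k = x U\<^sub>k\<^sub>-\<^sub>1 + T\<^sub>k\<close>.\<close>
fun chebT :: "('v \<Rightarrow> real) \<Rightarrow> nat \<Rightarrow> 'v \<Rightarrow> real"
  and chebU :: "('v \<Rightarrow> real) \<Rightarrow> nat \<Rightarrow> 'v \<Rightarrow> real" where
  "chebT g 0 = g"
| "chebT g (Suc k) = (\<lambda>u. PF (chebT g k) u - chebU g k u + PF (PF (chebU g k)) u)"
| "chebU g 0 = (\<lambda>u. 0)"
| "chebU g (Suc k) = (\<lambda>u. PF (chebU g k) u + chebT g k u)"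

text \<open>Pell's identity \<open>T\<^sub>k\<^sup>2 + (1 - x\<^sup>2) U\<^sub>k\<^sub>-\<^sub>1\<^sup>2 = 1\<close> in operator form.\<close>
lemma chebT_chebU_energy:
  "inner_\<pi> (chebT g k) (chebT g k) + inner_\<pi> (chebU g k) (chebU g k)
     - inner_\<pi> (PF (chebU g k)) (PF (chebU g k)) = inner_\<pi> g g"
proof (induction k)
  case 0
  then show ?case by (simp add: inner_\<pi>_def PF_zero)
next
  case (Suc k)
  define t s where "t = chebT g k" and "s = chebU g k"
  have "inner_\<pi> s (PF t) = inner_\<pi> t (PF s)"
    and "inner_\<pi> s (PF (PF t)) = inner_\<pi> t (PF (PF s))"
    and "inner_\<pi> s (PF (PF (PF t))) = inner_\<pi> t (PF (PF (PF s)))"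
    by (metis inner_\<pi>_PF inner_\<pi>_commute)+
  with Suc.IH show ?case
    by (simp add: t_def[symmetric] s_def[symmetric] PF_add PF_diff inner_\<pi>_add_left
        inner_\<pi>_add_right inner_\<pi>_diff_left inner_\<pi>_diff_right inner_\<pi>_PF inner_\<pi>_commute[of s t])
qed

lemma inner_\<pi>_chebT_le: "inner_\<pi> (chebT g k) (chebT g k) \<le> inner_\<pi> g g"
  using chebT_chebU_energy[of g k] inner_\<pi>_PF_le[of "chebU g k"] by linarith

lemma chebT_Suc_Suc: "chebT g (Suc (Suc k)) u + chebT g k u = 2 * PF (chebT g (Suc k)) u"
  by (simp add: PF_add PF_diff)

lemma PF_chebT_nat_abs:
  "PF (chebT g (nat \<bar>j\<bar>)) u = (chebT g (nat \<bar>j + 1\<bar>) u + chebT g (nat \<bar>j - 1\<bar>) u) / 2"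
proof (cases "j = 0")
  case True
  then show ?thesis by (simp add: PF_zero)
next
  case False
  define k where "k = nat \<bar>j\<bar> - 1"
  have "nat \<bar>j\<bar> = Suc k" "{nat \<bar>j + 1\<bar>, nat \<bar>j - 1\<bar>} = {Suc (Suc k), k}"
    using False by (auto simp: k_def)
  then show ?thesis
    using chebT_Suc_Suc[of g k u] by (auto simp: doubleton_eq_iff)
qed

text \<open>The operator analogue of \<open>x\<^sup>m = E T\<^bsub>|S\<^sub>m|\<^esub>(x)\<close> for the simple random walk \<open>S\<^sub>m\<close>.\<close>
lemma PF_power_eq_average_chebT:
  "(PF ^^ m) g u = (\<Sum>xs | length xs = m. chebT g (nat \<bar>step_sum xs\<bar>) u) / 2 ^ m"
proof (induction m arbitrary: u)
  case 0
  then show ?case by (simp add: step_sum_def)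
next
  case (Suc m)
  have "(PF ^^ m) g = (\<lambda>u. (\<Sum>xs | length xs = m. chebT g (nat \<bar>step_sum xs\<bar>) u) / 2 ^ m)"
    using Suc.IH by (rule ext)
  then have "(PF ^^ Suc m) g u
      = PF (\<lambda>u. (\<Sum>xs | length xs = m. chebT g (nat \<bar>step_sum xs\<bar>) u) / 2 ^ m) u"
    by simp
  also have "\<dots> = (\<Sum>xs | length xs = m. PF (chebT g (nat \<bar>step_sum xs\<bar>)) u) / 2 ^ m"
    by (simp add: PF_divide PF_sum)
  also have "\<dots> = (\<Sum>xs | length xs = Suc m. chebT g (nat \<bar>step_sum xs\<bar>) u) / 2 ^ Suc m"
    by (simp add: PF_chebT_nat_abs sum_bool_lists_Suc step_sum_Cons flip: sum_divide_distrib)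
  finally show ?case .
qed

definition supported_in_ball :: "'v \<Rightarrow> nat \<Rightarrow> ('v \<Rightarrow> real) \<Rightarrow> bool" where
  "supported_in_ball r k f \<longleftrightarrow> (\<forall>z. f z \<noteq> 0 \<longrightarrow> gdist cond r z < k)"

lemma supported_in_ball_PF:
  assumes "supported_in_ball r k f"
  shows "supported_in_ball r (Suc k) (PF f)"
  unfolding supported_in_ball_def
proof (intro allI impI)
  fix z assume "PF f z \<noteq> 0"
  then obtain v where "P z v * f v \<noteq> 0"
    unfolding PF_def by (meson sum.neutral)
  then have "cond z v \<noteq> 0" "f v \<noteq> 0"
    by (auto simp: P_eq)
  then show "gdist cond r z < Suc k"
    using gdist_le_Suc_gdist[of z v r] assms by (auto simp: supported_in_ball_def)
qed

lemma supported_in_ball_chebT_chebU: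
  assumes "supported_in_ball r 1 g"
  shows "supported_in_ball r (Suc k) (chebT g k) \<and> supported_in_ball r k (chebU g k)"
proof (induction k)
  case 0
  then show ?case using assms by (simp add: supported_in_ball_def)
next
  case (Suc k)
  then have "supported_in_ball r (Suc (Suc k)) (PF (chebT g k))"
    "supported_in_ball r (Suc k) (PF (chebU g k))"
    "supported_in_ball r (Suc (Suc k)) (PF (PF (chebU g k)))"
    by (auto intro: supported_in_ball_PF)
  with Suc show ?case
    unfolding supported_in_ball_def
    by (metis (no_types, lifting) chebT.simps(2) chebU.simps(2) add.right_neutral diff_zero
        less_SucI)
qed

lemma chebT_indicator_eq_0:
  assumes "k < gdist cond r z"
  shows "chebT (indicator {r}) k z = 0"
proof -
  have "supported_in_ball r 1 (indicator {r})"
    by (simp add: supported_in_ball_def indicator_def gdist_self)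
  then show ?thesis
    using supported_in_ball_chebT_chebU[of r "indicator {r}" k] assms
    by (auto simp: supported_in_ball_def)
qed

lemma abs_chebT_indicator_le:
  assumes "z \<in> F" "r \<in> F"
  shows "\<bar>chebT (indicator {r}) k z\<bar> \<le> sqrt (\<pi> r / \<pi> z)"
proof -
  define t where "t = chebT (indicator {r}) k"
  have "0 \<le> \<pi> u * (t u * t u)" for u
    using \<pi>_pos[of u] by simp
  then have "\<pi> z * (t z)\<^sup>2 \<le> inner_\<pi> t t"
    unfolding inner_\<pi>_def power2_eq_square mult.assoc
    by (intro member_le_sum) (use assms finite_F in auto)
  also have "\<dots> \<le> \<pi> r"
    using inner_\<pi>_chebT_le[of "indicator {r}" k] assms finite_F
    by (simp add: t_def inner_\<pi>_def indicator_def if_distrib sum.delta cong: if_cong)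
  finally have "(t z)\<^sup>2 \<le> \<pi> r / \<pi> z"
    using \<pi>_pos[of z] by (simp add: pos_le_divide_eq mult.commute)
  then show ?thesis
    unfolding t_def by (metis real_sqrt_abs real_sqrt_le_mono)
qed

lemma pn_within_eq_PF_power: "pn_within F m x r = (PF ^^ m) (indicator {r}) x"
  by (induction m arbitrary: x) (simp_all add: PF_def)

lemma carne_varopoulos_within:
  assumes "z \<in> F" "r \<in> F" "1 \<le> m"
  shows "pn_within F m z r
    \<le> 2 * sqrt (\<pi> r / \<pi> z) * exp (- (real (gdist cond r z))\<^sup>2 / (2 * real m))"
proof -
  define d where "d = real (gdist cond r z)"
  define M where "M = sqrt (\<pi> r / \<pi> z)"
  have chebT_le: "chebT (indicator {r}) (nat \<bar>j\<bar>) z \<le> M * (if d \<le> \<bar>real_of_int j\<bar> then 1 else 0)"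
    for j :: int
    using abs_chebT_indicator_le[OF assms(1,2), of "nat \<bar>j\<bar>"] chebT_indicator_eq_0[of "nat \<bar>j\<bar>" r z]
    by (cases "d \<le> \<bar>real_of_int j\<bar>") (auto simp: M_def d_def)
  have "pn_within F m z r = (\<Sum>xs | length xs = m. chebT (indicator {r}) (nat \<bar>step_sum xs\<bar>) z) / 2 ^ m"
    by (simp add: pn_within_eq_PF_power PF_power_eq_average_chebT)
  also have "\<dots> \<le> (\<Sum>xs | length xs = m. M * (if d \<le> \<bar>real_of_int (step_sum xs)\<bar> then 1 else 0)) / 2 ^ m"
    by (intro divide_right_mono sum_mono chebT_le) simp
  also have "\<dots> = M * (\<Sum>xs | length xs = m. if d \<le> \<bar>real_of_int (step_sum xs)\<bar> then 1 else 0) / 2 ^ m"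
    by (simp add: sum_distrib_left)
  also have "\<dots> \<le> M * (2 * 2 ^ m * exp (- d\<^sup>2 / (2 * m))) / 2 ^ m"
    by (intro divide_right_mono mult_left_mono card_step_sum_tail)
      (use assms \<pi>_pos in \<open>auto simp: M_def d_def less_imp_le\<close>)
  finally show ?thesis
    by (simp add: M_def d_def)
qed

end

context network_with_killing
begin

theorem carne_varopoulos:
  assumes "1 \<le> m"
  shows "p m z r \<le> 2 * sqrt (\<pi> r / \<pi> z) * exp (- (real (gdist cond r z))\<^sup>2 / (2 * real m))"
proof (rule field_le_epsilon)
  fix \<epsilon> :: real
  assume "0 < \<epsilon>"
  then obtain G where G: "finite G" "p m z r \<le> pn_within G m z r + \<epsilon>"
    using pn_approx_within by blast
  define G' where "G' = insert z (insert r G)"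
  interpret restricted_network cond K G'
    by unfold_locales (simp add: G'_def G(1))
  have "pn_within G m z r \<le> pn_within G' m z r"
    by (rule pn_within_mono) (auto simp: G'_def G(1))
  also have "\<dots> \<le> 2 * sqrt (\<pi> r / \<pi> z) * exp (- (real (gdist cond r z))\<^sup>2 / (2 * real m))"
    by (rule carne_varopoulos_within) (use assms in \<open>auto simp: G'_def\<close>)
  finally show "p m z r
      \<le> 2 * sqrt (\<pi> r / \<pi> z) * exp (- (real (gdist cond r z))\<^sup>2 / (2 * real m)) + \<epsilon>"
    using G(2) by linarith
qed

text \<open>Each step taken inside the ball of radius \<open>R\<close> around \<open>r\<close> costs a factor \<open>1 - \<delta>\<close>;
  a walk standing outside the ball is covered by the escape bound \<open>E\<close>.\<close>
lemma pn_le_survival_plus_escape: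
  fixes R :: real
  assumes \<delta>: "0 \<le> \<delta>" "\<delta> \<le> 1"
    and killing_in_ball: "\<And>u. gdist cond r u < R \<Longrightarrow> \<delta> \<le> K u / \<pi> u"
    and escape: "\<And>z j. 1 \<le> j \<Longrightarrow> j \<le> n \<Longrightarrow> R \<le> gdist cond r z \<Longrightarrow> p j z r \<le> E"
    and "0 \<le> E" "m \<le> n"
  shows "p m x r \<le> (1 - \<delta>) ^ m + E"
  using \<open>m \<le> n\<close>
proof (induction m arbitrary: x)
  case 0
  then show ?case using pn_le_1[of 0 x r] \<open>0 \<le> E\<close> by simp
next
  case (Suc m)
  show ?case
  proof (cases "R \<le> gdist cond r x")
    case True
    have "0 \<le> (1 - \<delta>) ^ Suc m"
      using \<delta> by simp
    then show ?thesis
      using escape[of "Suc m" x] True Suc.prems by simp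
  next
    case False
    have "p (Suc m) x r \<le> cv cond x / \<pi> x * ((1 - \<delta>) ^ m + E)"
      using infsum_P_mult_le[of "\<lambda>z. p m z r" "(1 - \<delta>) ^ m + E" x] Suc pn_nonneg by simp
    also have "cv cond x / \<pi> x = 1 - K x / \<pi> x"
    proof -
      have "cv cond x = \<pi> x - K x"
        by (simp add: \<pi>_def)
      then show ?thesis
        using \<pi>_neq_0[of x] by (simp add: diff_divide_distrib)
    qed
    also have "(1 - K x / \<pi> x) * ((1 - \<delta>) ^ m + E) \<le> (1 - \<delta>) * ((1 - \<delta>) ^ m + E)"
      using killing_in_ball[of x] False \<delta> \<open>0 \<le> E\<close> by (intro mult_right_mono) auto
    also have "\<dots> \<le> (1 - \<delta>) ^ Suc m + E"
      using \<delta> \<open>0 \<le> E\<close> by (simp add: algebra_simps mult_left_le_one_le)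
    finally show ?thesis .
  qed
qed

lemma exists_pn_alternating_pos: "\<exists>s. \<forall>n. 0 < p n (if even n then r else s) r"
proof -
  have "\<exists>s. 0 < cond r s"
  proof (rule ccontr)
    assume "\<nexists>s. 0 < cond r s"
    then have "cond r = (\<lambda>s. 0)"
      using cond_nonneg[of r] by (auto simp: fun_eq_iff not_less intro: order.antisym)
    then show False
      using cv_pos[of r] by (simp add: cv_def)
  qed
  then obtain s where s: "0 < cond r s" ..
  have "0 < p n (if even n then r else s) r" for n
  proof (induction n)
    case 0
    then show ?case by simp
  next
    case (Suc n)
    define a b where "a = (if even (Suc n) then r else s)" and "b = (if even n then r else s)"
    have "0 < P a b"
      using s cond_sym[of r s] \<pi>_pos[of a] by (auto simp: P_eq a_def b_def)
    then have "0 < P a b * p n b r"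
      using Suc by (simp add: b_def)
    also have "\<dots> \<le> p (Suc n) a r"
      by (rule P_mult_pn_le_pn_Suc)
    finally show ?case by (simp add: a_def)
  qed
  then show ?thesis by blast
qed

end

definition kill_floor :: "real \<Rightarrow> real \<Rightarrow> real" where
  "kill_floor \<gamma> R = min 1 (min (ln 2 powr \<gamma> / R) ((ln R / 2) powr \<gamma> / R\<^sup>2))"

text \<open>On \<open>[2, R]\<close> the profile \<open>b\<^sup>-\<^sup>2 (ln b)\<^sup>\<gamma>\<close> is controlled by its value at \<open>2\<close> when
  \<open>b\<^sup>2 \<le> R\<close>, and by \<open>ln b \<ge> ln R / 2\<close> otherwise.\<close>
lemma kill_floor_le:
  assumes "0 < \<gamma>" "2 \<le> b" "b \<le> R"
  shows "kill_floor \<gamma> R \<le> min 1 (b powr (-2) * ln b powr \<gamma>)"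
proof -
  have b: "0 < b" and b_powr: "b powr (-2) = 1 / b\<^sup>2"
    using assms by (auto simp: powr_minus powr_numeral divide_inverse)
  have "min (ln 2 powr \<gamma> / R) ((ln R / 2) powr \<gamma> / R\<^sup>2) \<le> ln b powr \<gamma> / b\<^sup>2"
  proof (cases "b\<^sup>2 \<le> R")
    case True
    have "ln 2 powr \<gamma> / R \<le> ln b powr \<gamma> / b\<^sup>2"
      using True assms b by (intro frac_le powr_mono2) auto
    then show ?thesis by simp
  next
    case False
    have "ln R \<le> ln (b\<^sup>2)"
      using False b assms by simp
    then have "ln R / 2 \<le> ln b"
      using b by (simp add: ln_realpow)
    moreover have "b\<^sup>2 \<le> R\<^sup>2"
      using assms b by (intro power_mono) auto
    ultimately have "(ln R / 2) powr \<gamma> / R\<^sup>2 \<le> ln b powr \<gamma> / b\<^sup>2"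
      using assms b by (intro frac_le powr_mono2) auto
    then show ?thesis by simp
  qed
  then show ?thesis
    by (auto simp: kill_floor_def b_powr)
qed

lemma kill_floor_budget:
  fixes x \<gamma> c :: real
  defines "L \<equiv> ln x powr (\<gamma>/2)"
  defines "R \<equiv> sqrt (x * L)"
  assumes \<gamma>: "0 < \<gamma>" and ln_x: "1 \<le> ln x" and x: "4 \<le> x" and c: "c = 4 powr (-\<gamma>)"
    and le_x: "c * L \<le> x" and le_ln2_term: "c * L * R \<le> x * ln 2 powr \<gamma>"
  shows "c * L \<le> x * kill_floor \<gamma> R"
proof -
  have L: "1 \<le> L"
    using \<gamma> ln_x by (simp add: L_def ge_one_powr_ge_zero)
  have R2: "R\<^sup>2 = x * L" and R: "sqrt x \<le> R" "0 < R"
    using x L by (auto simp: R_def intro: real_sqrt_le_mono)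
  have "ln (sqrt x) \<le> ln R"
    using R x by simp
  then have ln_R: "ln x / 4 \<le> ln R / 2"
    using x by (simp add: ln_sqrt)
  have "L * L = ln x powr \<gamma>"
    unfolding L_def by (metis powr_add field_sum_of_halves)
  then have "c * (L * L) = ln x powr \<gamma> / 4 powr \<gamma>"
    by (simp add: c powr_minus divide_inverse mult.commute)
  also have "\<dots> = (ln x / 4) powr \<gamma>"
    using ln_x by (simp add: powr_divide)
  also have "\<dots> \<le> (ln R / 2) powr \<gamma>"
    using ln_R ln_x \<gamma> by (intro powr_mono2) auto
  finally have "c * L \<le> x * ((ln R / 2) powr \<gamma> / R\<^sup>2)"
    using x L by (simp add: R2 field_simps)
  moreover have "c * L \<le> x * (ln 2 powr \<gamma> / R)"
    using le_ln2_term R by (simp add: field_simps)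
  ultimately show ?thesis
    using le_x by (simp add: kill_floor_def min_def)
qed

lemma eventually_kill_floor_budget:
  fixes \<gamma> :: real
  assumes "0 < \<gamma>"
  shows "\<forall>\<^sub>F x in at_top. 1 \<le> ln x \<and> 4 \<le> x \<and>
    4 powr (-\<gamma>) * ln x powr (\<gamma>/2) \<le> x * kill_floor \<gamma> (sqrt (x * ln x powr (\<gamma>/2)))"
proof -
  have "\<forall>\<^sub>F x in at_top. 1 \<le> ln x \<and> 4 \<le> x \<and> 4 powr (-\<gamma>) * ln x powr (\<gamma>/2) \<le> x \<and>
      4 powr (-\<gamma>) * ln x powr (\<gamma>/2) * sqrt (x * ln x powr (\<gamma>/2)) \<le> x * ln 2 powr \<gamma>"
    using assms by (intro eventually_conj) real_asymp+
  then show ?thesis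
  proof (rule eventually_mono, elim conjE, intro conjI)
    fix x :: real
    assume "1 \<le> ln x" "4 \<le> x" "4 powr (-\<gamma>) * ln x powr (\<gamma>/2) \<le> x"
      "4 powr (-\<gamma>) * ln x powr (\<gamma>/2) * sqrt (x * ln x powr (\<gamma>/2)) \<le> x * ln 2 powr \<gamma>"
    then show "4 powr (-\<gamma>) * ln x powr (\<gamma>/2) \<le> x * kill_floor \<gamma> (sqrt (x * ln x powr (\<gamma>/2)))"
      by (rule kill_floor_budget[OF assms _ _ refl])
  qed
qed

locale killed_network =
  fixes \<gamma> :: real and cond :: "'v \<Rightarrow> 'v \<Rightarrow> real" and r :: 'v
  assumes network_cond: "network cond"
    and cmin_pos: "0 < cmin cond"
begin

abbreviation C :: real where
  "C \<equiv> sqrt (8 * cv cond r / cmin cond)"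

definition \<mu> :: "'v \<Rightarrow> real" where
  "\<mu> u = min 1 (bracket cond r u powr (-2) * ln (bracket cond r u) powr \<gamma>)"

lemma killing_eq: "killing \<gamma> cond r u = cv cond u * \<mu> u"
  by (simp add: killing_def \<mu>_def)

lemma \<mu>_nonneg: "0 \<le> \<mu> u" and \<mu>_le_1: "\<mu> u \<le> 1"
  by (auto simp: \<mu>_def)

lemma cmin_le_cv: "cmin cond \<le> cv cond u"
proof -
  have "0 \<le> cv cond v" for v
    using network_cond unfolding cv_def network_def by (auto intro: infsum_nonneg)
  then show ?thesis
    unfolding cmin_def by (intro cINF_lower bdd_belowI[of _ 0]) auto
qed

sublocale network_with_killing cond "killing \<gamma> cond r"
proof
  show "0 < cv cond u" for u
    using cmin_pos cmin_le_cv[of u] by linarith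
  then show "0 \<le> killing \<gamma> cond r u" for u
    using \<mu>_nonneg[of u] by (simp add: killing_eq less_imp_le)
qed (fact network_cond)

lemma \<pi>_eq: "\<pi> u = cv cond u * (1 + \<mu> u)"
  by (simp add: \<pi>_def killing_eq algebra_simps)

lemma half_\<mu>_le_killing_div_\<pi>: "\<mu> u / 2 \<le> killing \<gamma> cond r u / \<pi> u"
proof -
  have "killing \<gamma> cond r u / \<pi> u = \<mu> u / (1 + \<mu> u)"
    using cv_pos[of u] \<mu>_nonneg[of u] by (simp add: killing_eq \<pi>_eq)
  also have "\<mu> u / 2 \<le> \<mu> u / (1 + \<mu> u)"
    using \<mu>_nonneg[of u] \<mu>_le_1[of u] by (intro divide_left_mono) auto
  finally show ?thesis .
qed

lemma two_le_C: "2 \<le> C"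
proof -
  have "4 \<le> 8 * cv cond r / cmin cond"
    using cmin_le_cv[of r] cmin_pos by (simp add: field_simps)
  then show ?thesis
    using real_sqrt_le_mono[of 4] by simp
qed

lemma C_pos: "0 < C"
  using two_le_C by linarith

lemma two_sqrt_\<pi>_ratio_le_C: "2 * sqrt (\<pi> r / \<pi> z) \<le> C"
proof -
  have "\<pi> r \<le> 2 * cv cond r" "cmin cond \<le> \<pi> z"
    using \<mu>_le_1[of r] cv_pos[of r] cmin_le_cv[of z] cv_le_\<pi>[of z] by (auto simp: \<pi>_eq)
  then have le: "4 * (\<pi> r / \<pi> z) \<le> 8 * cv cond r / cmin cond"
    using \<pi>_pos[of r] \<pi>_pos[of z] cmin_pos by (simp add: frac_le)
  have "2 * sqrt (\<pi> r / \<pi> z) = sqrt (4 * (\<pi> r / \<pi> z))"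
    by (subst real_sqrt_mult) simp
  also have "\<dots> \<le> C"
    using le by (rule real_sqrt_le_mono)
  finally show ?thesis .
qed

lemma pn_escape_le:
  fixes R :: real
  assumes "1 \<le> j" "j \<le> n" "0 \<le> R" "R \<le> gdist cond r z"
  shows "p j z r \<le> C * exp (- R\<^sup>2 / (2 * real n))"
proof -
  have "R\<^sup>2 / (2 * real n) \<le> (real (gdist cond r z))\<^sup>2 / (2 * real j)"
    using assms by (intro frac_le power_mono) auto
  then have "exp (- (real (gdist cond r z))\<^sup>2 / (2 * real j)) \<le> exp (- R\<^sup>2 / (2 * real n))"
    by simp
  with two_sqrt_\<pi>_ratio_le_C[of z]
  have "2 * sqrt (\<pi> r / \<pi> z) * exp (- (real (gdist cond r z))\<^sup>2 / (2 * real j))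
      \<le> C * exp (- R\<^sup>2 / (2 * real n))"
    using C_pos by (intro mult_mono) auto
  with carne_varopoulos[OF assms(1), of z r] show ?thesis
    by linarith
qed

lemma kill_floor_le_killing_div_\<pi>:
  fixes R :: real
  assumes "0 < \<gamma>" "2 \<le> R" "gdist cond r u < R"
  shows "kill_floor \<gamma> R / 2 \<le> killing \<gamma> cond r u / \<pi> u"
proof -
  have "kill_floor \<gamma> R \<le> \<mu> u"
    unfolding \<mu>_def using assms by (intro kill_floor_le) (auto simp: bracket_def)
  then show ?thesis
    using half_\<mu>_le_killing_div_\<pi>[of u] by linarith
qed

lemma pn_le_large_n:
  fixes n :: nat and c L R :: real
  defines "L \<equiv> ln n powr (\<gamma>/2)"
  defines "R \<equiv> sqrt (n * L)"
  assumes "0 < \<gamma>" "1 \<le> ln n" "4 \<le> n" and budget: "c * L \<le> n * kill_floor \<gamma> R"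
  shows "p n x r \<le> exp (- (c / 2 * L)) + C * exp (- (L / 2))"
proof -
  define \<delta> where "\<delta> = kill_floor \<gamma> R / 2"
  have L: "1 \<le> L"
    using assms by (simp add: L_def ge_one_powr_ge_zero)
  have "4 \<le> n * L"
    using mult_mono[of 4 n 1 L] L \<open>4 \<le> n\<close> by simp
  then have R2: "R\<^sup>2 = n * L" and R: "2 \<le> R"
    using real_sqrt_le_mono[of 4 "n * L"] by (auto simp: R_def)
  have \<delta>: "0 \<le> \<delta>" "\<delta> \<le> 1"
    using R by (auto simp: \<delta>_def kill_floor_def)
  have "p n x r \<le> (1 - \<delta>) ^ n + C * exp (- R\<^sup>2 / (2 * real n))"
  proof (rule pn_le_survival_plus_escape[OF \<delta>])
    show "\<delta> \<le> killing \<gamma> cond r u / \<pi> u" if "gdist cond r u < R" for u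
      using kill_floor_le_killing_div_\<pi>[OF \<open>0 < \<gamma>\<close> R that] by (simp add: \<delta>_def)
    show "p j z r \<le> C * exp (- R\<^sup>2 / (2 * real n))" if "1 \<le> j" "j \<le> n" "R \<le> gdist cond r z" for j z
      using pn_escape_le[OF that(1,2) _ that(3)] R by simp
  qed (use C_pos in auto)
  also have "(1 - \<delta>) ^ n \<le> exp (- \<delta>) ^ n"
    using \<delta> exp_ge_add_one_self[of "- \<delta>"] by (intro power_mono) auto
  also have "\<dots> \<le> exp (- (c / 2 * L))"
    using budget by (simp add: \<delta>_def flip: exp_of_nat_mult)
  also have "- R\<^sup>2 / (2 * real n) = - (L / 2)"
    using \<open>4 \<le> n\<close> by (simp add: R2)
  finally show ?thesis by simp
qed

lemma ln_Sup_pn_div_ln_tendsto_bot: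
  assumes "2 < \<gamma>" "0 < \<kappa>"
    and decay: "\<And>x n. 2 \<le> n \<Longrightarrow> p n x r \<le> C * exp (- \<kappa> * ln n powr (\<gamma> / 2))"
  shows "filterlim (\<lambda>n. ln (SUP u. p n u r) / ln n) at_bot sequentially"
proof -
  define g where "g x = (ln C - \<kappa> * ln x powr (\<gamma>/2)) / ln x" for x :: real
  have "filterlim (\<lambda>x::real. (A - \<kappa> * ln x powr (\<gamma>/2)) / ln x) at_bot at_top" for A
    using assms(1,2) by real_asymp
  then have "filterlim g at_bot at_top"
    unfolding g_def .
  then have g: "filterlim (\<lambda>n. g (real n)) at_bot sequentially"
    by (rule filterlim_compose[OF _ filterlim_real_sequentially])
  have "ln (SUP u. p n u r) / ln n \<le> g n" if n: "2 \<le> n" for n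
  proof -
    obtain s where "0 < p n (if even n then r else s) r"
      using exists_pn_alternating_pos by blast
    moreover have "bdd_above (range (\<lambda>u. p n u r))"
      by (auto intro!: bdd_aboveI[of _ 1] pn_le_1)
    ultimately have pos: "0 < (SUP u. p n u r)"
      by (meson cSUP_upper UNIV_I less_le_trans)
    have "(SUP u. p n u r) \<le> C * exp (- \<kappa> * ln n powr (\<gamma>/2))"
      by (rule cSUP_least) (use decay[OF n] in auto)
    then have "ln (SUP u. p n u r) \<le> ln (C * exp (- \<kappa> * ln n powr (\<gamma>/2)))"
      using pos by simp
    also have "\<dots> = ln C - \<kappa> * ln n powr (\<gamma>/2)"
      by (simp add: ln_mult_pos[OF C_pos])
    finally have "ln (SUP u. p n u r) \<le> ln C - \<kappa> * ln n powr (\<gamma>/2)" .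
    moreover have "0 < ln (real n)"
      using n by simp
    ultimately show ?thesis
      unfolding g_def by (intro divide_right_mono) auto
  qed
  then have "\<forall>\<^sub>F n in sequentially. ln (SUP u. p n u r) / ln n \<le> g n"
    by (rule eventually_sequentiallyI)
  with g show ?thesis
    by (rule filterlim_at_bot_mono)
qed

end

lemma le_mult_exp_neg_two_regimes:
  fixes q C b \<kappa> l l0 :: real
  assumes "q \<le> 1" "2 \<le> C" "0 \<le> l" "\<kappa> \<le> b / 2" "\<kappa> * l0 \<le> ln 2"
    and large: "l0 < l \<Longrightarrow> q \<le> 2 * C * exp (- (b * l))"
  shows "q \<le> C * exp (- (\<kappa> * l))"
proof (cases "\<kappa> * l \<le> ln 2")
  case True
  have "1 = 2 * exp (- ln (2 :: real))"
    by (simp add: exp_minus)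
  also have "\<dots> \<le> C * exp (- (\<kappa> * l))"
    using True assms(2) by (intro mult_mono) auto
  finally show ?thesis
    using assms(1) by linarith
next
  case False
  have "0 < \<kappa>"
    using False assms(3) mult_nonpos_nonneg[of \<kappa> l] ln_gt_zero[of 2] by linarith
  moreover have "\<kappa> * l0 < \<kappa> * l"
    using False assms(5) by linarith
  ultimately have "l0 < l"
    by simp
  have half: "2 * exp (- (\<kappa> * l)) \<le> 1"
    using False exp_le_cancel_iff[of "- (\<kappa> * l)" "- ln 2"] by (simp add: exp_minus)
  have "q \<le> 2 * C * exp (- (b * l))"
    using large \<open>l0 < l\<close> by blast
  also have "\<dots> \<le> 2 * C * exp (- (\<kappa> * l) + - (\<kappa> * l))"
    using assms(2-4) mult_right_mono[of "2 * \<kappa>" b l] by simp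
  also have "\<dots> = C * exp (- (\<kappa> * l)) * (2 * exp (- (\<kappa> * l)))"
    unfolding exp_add by (simp add: mult_ac)
  also have "\<dots> \<le> C * exp (- (\<kappa> * l))"
    using half assms(2) by (intro mult_left_le) auto
  finally show ?thesis .
qed

lemma killed_walk_decay_large_n:
  fixes \<gamma> :: real
  assumes "0 < \<gamma>"
  obtains b N where "0 < b" "2 \<le> N"
    "\<And>(cond :: 'v \<Rightarrow> 'v \<Rightarrow> real) r x n. network cond \<Longrightarrow> 0 < cmin cond \<Longrightarrow> N \<le> n \<Longrightarrow>
       pn cond (killing \<gamma> cond r) n x r
         \<le> 2 * sqrt (8 * cv cond r / cmin cond) * exp (- (b * ln n powr (\<gamma>/2)))"
proof -
  define c where "c = (4::real) powr (-\<gamma>)"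
  define b where "b = min (c / 2) (1 / 2)"
  obtain X where X: "\<And>x. X \<le> x \<Longrightarrow> 1 \<le> ln x \<and> 4 \<le> x \<and>
      c * ln x powr (\<gamma>/2) \<le> x * kill_floor \<gamma> (sqrt (x * ln x powr (\<gamma>/2)))"
    using eventually_kill_floor_budget[OF assms] by (auto simp: c_def eventually_at_top_linorder)
  show ?thesis
  proof (rule that[of b "max 2 (nat \<lceil>X\<rceil>)"])
    show "0 < b"
      by (simp add: b_def c_def)
    fix cond :: "'v \<Rightarrow> 'v \<Rightarrow> real" and r x n
    assume "network cond" "0 < cmin cond" and n: "max 2 (nat \<lceil>X\<rceil>) \<le> n"
    then interpret killed_network \<gamma> cond r
      by unfold_locales
    define L where "L = ln n powr (\<gamma>/2)"
    have "X \<le> n"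
      using n by linarith
    then have "p n x r \<le> exp (- (c / 2 * L)) + C * exp (- (L / 2))"
      unfolding L_def using X[of n] assms by (intro pn_le_large_n) auto
    also have "\<dots> \<le> C * exp (- (b * L)) + C * exp (- (b * L))"
    proof (rule add_mono)
      have "0 \<le> L" "b \<le> c / 2" "b \<le> 1 / 2"
        by (simp_all add: L_def b_def)
      then have "b * L \<le> c / 2 * L" "b * L \<le> L / 2"
        using mult_right_mono[of b "c / 2" L] mult_right_mono[of b "1 / 2" L] by simp_all
      then have e1: "exp (- (c / 2 * L)) \<le> exp (- (b * L))"
        and e2: "exp (- (L / 2)) \<le> exp (- (b * L))"
        by simp_all
      have "1 * exp (- (b * L)) \<le> C * exp (- (b * L))"
        using two_le_C by (intro mult_right_mono) (linarith, simp)
      with e1 show "exp (- (c / 2 * L)) \<le> C * exp (- (b * L))"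
        by linarith
      show "C * exp (- (L / 2)) \<le> C * exp (- (b * L))"
        by (rule mult_left_mono[OF e2]) (use C_pos in linarith)
    qed
    finally show "p n x r \<le> 2 * C * exp (- (b * ln n powr (\<gamma>/2)))"
      by (simp add: L_def)
  qed simp
qed

lemma killed_walk_decay:
  fixes \<gamma> :: real
  obtains \<kappa> where "0 < \<kappa>"
    "\<And>(cond :: 'v \<Rightarrow> 'v \<Rightarrow> real) r x n. network cond \<Longrightarrow> 0 < cmin cond \<Longrightarrow> 2 \<le> n \<Longrightarrow>
      pn cond (killing \<gamma> cond r) n x r
        \<le> sqrt (8 * cv cond r / cmin cond) * exp (- \<kappa> * ln n powr (\<gamma> / 2))"
proof -
  define L where "L n = ln (real n) powr (\<gamma>/2)" for n :: nat
  obtain b N where b: "0 < b" and N: "2 \<le> N"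
    and large: "\<And>(cond :: 'v \<Rightarrow> 'v \<Rightarrow> real) r x n. network cond \<Longrightarrow> 0 < cmin cond \<Longrightarrow>
      2 \<le> n \<Longrightarrow> L N < L n \<Longrightarrow>
      pn cond (killing \<gamma> cond r) n x r \<le> 2 * sqrt (8 * cv cond r / cmin cond) * exp (- (b * L n))"
  proof (cases "0 < \<gamma>")
    case True
    obtain b N where "0 < b" "2 \<le> N" and decay: "\<And>(cond :: 'v \<Rightarrow> 'v \<Rightarrow> real) r x n.
        network cond \<Longrightarrow> 0 < cmin cond \<Longrightarrow> N \<le> n \<Longrightarrow>
        pn cond (killing \<gamma> cond r) n x r \<le> 2 * sqrt (8 * cv cond r / cmin cond) * exp (- (b * L n))"
      using killed_walk_decay_large_n[OF True] unfolding L_def by metis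
    moreover have "N \<le> n" if "2 \<le> n" "L N < L n" for n
    proof (rule ccontr)
      assume "\<not> N \<le> n"
      then have "ln (real n) \<le> ln (real N)"
        using that by simp
      then have "L n \<le> L N"
        unfolding L_def using that True by (intro powr_mono2) auto
      with that show False by simp
    qed
    ultimately show ?thesis
      using that by blast
  next
    case False
    have "L n \<le> L 2" if "2 \<le> n" for n
      using that False by (auto simp: L_def intro!: powr_mono2')
    then show ?thesis
      by (intro that[of 1 2]) (auto simp: not_less[symmetric])
  qed
  have "0 < L N"
    using N by (simp add: L_def)
  define \<kappa> where "\<kappa> = min (b / 2) (ln 2 / L N)"
  have \<kappa>: "0 < \<kappa>" "\<kappa> \<le> b / 2" "\<kappa> * L N \<le> ln 2"
    using b \<open>0 < L N\<close> by (auto simp: \<kappa>_def min_def field_simps)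
  show ?thesis
  proof (rule that[OF \<kappa>(1)])
    fix cond :: "'v \<Rightarrow> 'v \<Rightarrow> real" and r x and n :: nat
    assume "network cond" "0 < cmin cond" and n: "2 \<le> n"
    then interpret killed_network \<gamma> cond r
      by unfold_locales
    have "p n x r \<le> C * exp (- (\<kappa> * L n))"
      using large[OF network_cond cmin_pos n] n
      by (intro le_mult_exp_neg_two_regimes[OF pn_le_1 two_le_C _ \<kappa>(2,3)]) (auto simp: L_def)
    then show "p n x r \<le> C * exp (- \<kappa> * ln n powr (\<gamma> / 2))"
      by (simp add: L_def)
  qed
qed

theorem lemma3p4:
  fixes \<gamma> :: real
  shows "(\<exists>\<kappa>>0. \<forall>(cond :: 'v \<Rightarrow> 'v \<Rightarrow> real) r.
            network cond \<and> cmin cond > 0 \<longrightarrow>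
            (\<forall>x n. n \<ge> 2 \<longrightarrow>
               pn cond (killing \<gamma> cond r) n x r
                 \<le> sqrt (8 * cv cond r / cmin cond) * exp (- \<kappa> * (ln (real n)) powr (\<gamma> / 2))))
       \<and> (\<gamma> > 2 \<longrightarrow> (\<forall>(cond :: 'v \<Rightarrow> 'v \<Rightarrow> real) r.
            network cond \<and> cmin cond > 0 \<longrightarrow>
            filterlim (\<lambda>n. ln (SUP u. pn cond (killing \<gamma> cond r) n u r) / ln (real n))
              at_bot sequentially))"
proof -
  obtain \<kappa> where \<kappa>: "0 < \<kappa>" and decay: "\<And>(cond :: 'v \<Rightarrow> 'v \<Rightarrow> real) r x n.
      network cond \<Longrightarrow> 0 < cmin cond \<Longrightarrow> 2 \<le> n \<Longrightarrow> pn cond (killing \<gamma> cond r) n x r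
        \<le> sqrt (8 * cv cond r / cmin cond) * exp (- \<kappa> * ln n powr (\<gamma> / 2))"
    using killed_walk_decay[where \<gamma> = \<gamma>] by blast
  have "filterlim (\<lambda>n. ln (SUP u. pn cond (killing \<gamma> cond r) n u r) / ln n) at_bot sequentially"
    if "2 < \<gamma>" "network cond \<and> 0 < cmin cond" for cond :: "'v \<Rightarrow> 'v \<Rightarrow> real" and r
  proof -
    interpret killed_network \<gamma> cond r
      using that by unfold_locales auto
    show ?thesis
      using that(1) \<kappa> decay[OF network_cond cmin_pos] by (rule ln_Sup_pn_div_ln_tendsto_bot)
  qed
  with \<kappa> decay show ?thesis
    by (intro conjI exI[of _ \<kappa>] allI impI) auto
qed

end
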